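(* Let $n\ge 2$ and let $Y\subseteq\mathbb{S}^{n-1}$ be a finite set with $I(Y)=\{\pm\alpha,\pm\beta\}$, where $\alpha,\beta$ are real numbers with $0<\beta<\alpha<1$ (so $Y$ is a spherical $4$-distance set). Let $X'=Y\cup(-Y)$. (1) If $|Y|\ge 2\binom{n+1}{2}$, then the two numbers \[k_1=\frac{1-\alpha^2}{\beta^2-\alpha^2},\qquad k_2=\frac{1-\beta^2}{\alpha^2-\beta^2}\] are integers. (2) If $|Y|\ge 2\binom{n+2}{3}+1$, then the two numbers \[k_1=\frac{1-\alpha^2}{\beta(\beta^2-\alpha^2)},\qquad k_2=\frac{1-\beta^2}{\alpha(\alpha^2-\beta^2)}\] are integers.
   Context: $\mathbb{S}^{n-1}$ is the unit sphere in $\mathbb{R}^n$. For $Y\subseteq\mathbb{R}^n$, $I(Y)=\{\mathbf{x}\cdot\mathbf{y}:\mathbf{x},\mathbf{y}\in Y,\ \mathbf{x}\neq\mathbf{y}\}$ (standard inner product). A spherical $s$-distance set is a finite subset $Y$ of $\mathbb{S}^{n-1}$ with $|I(Y)|=s$. *)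

theory Defs
  imports "HOL-Analysis.Analysis"
begin

definition inner_products :: "('a::real_inner) set \<Rightarrow> real set" where
  "inner_products Y = {x \<bullet> y | x y. x \<in> Y \<and> y \<in> Y \<and> x \<noteq> y}"

end

theory Submission
  imports
    Defs
    Jordan_Normal_Form.Jordan_Normal_Form_Uniqueness
    Jordan_Normal_Form.Jordan_Normal_Form_Existence
    "HOL-Computational_Algebra.Field_as_Ring"
begin

text \<open>
  Take a polynomial \<open>f\<close> with \<open>f(t) = s\<close> for \<open>t = \<plusminus>\<beta>\<close> and \<open>f(t) = 0\<close> for \<open>t = \<plusminus>\<alpha>\<close>, namely
  \<open>t\<^sup>2 - \<alpha>\<^sup>2\<close> for (1) and \<open>t\<^sup>3 - \<alpha>\<^sup>2 t\<close> for (2) (then \<open>f(-\<beta>) = -s\<close>).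
  On the unit sphere \<open>f(x \<bullet> y)\<close> is a homogeneous polynomial of degree 2 resp. 3 in \<open>y\<close>, so the
  matrix \<open>(f(x \<bullet> y))\<^sub>x\<^sub>,\<^sub>y\<^sub>\<in>\<^sub>Y\<close> has rank at most \<open>D = C(n+1,2)\<close> resp. \<open>C(n+2,3)\<close>.
  This matrix is \<open>s A + f(1) I\<close> for an integer matrix \<open>A\<close> (a graph adjacency matrix in case (1)),
  hence \<open>-f(1)/s\<close> is an eigenvalue of \<open>A\<close> of geometric multiplicity at least \<open>|Y| - D \<ge> |Y|/2\<close>.
  An algebraic conjugate of an irrational eigenvalue would have the same multiplicity, so either the
  eigenvalue is rational, hence an integer, or \<open>|Y| = 2D\<close> and \<open>A\<close> satisfies an irreducible
  quadratic equation; the latter is impossible for the adjacency matrix of a graph.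
\<close>

section \<open>Roots of rational polynomials\<close>

interpretation rat_complex_poly: map_poly_idom_hom "of_rat :: rat \<Rightarrow> complex" ..
interpretation rat_complex: field_hom' "of_rat :: rat \<Rightarrow> complex" ..

abbreviation complex_poly_of_rat :: "rat poly \<Rightarrow> complex poly" where
  "complex_poly_of_rat \<equiv> map_poly of_rat"

lemma of_rat_eq_of_real_of_rat: "(of_rat q :: complex) = complex_of_real (of_rat q)"
  by (cases q) (simp add: of_rat_rat)

lemma order_power:
  fixes p :: "'a::idom poly"
  assumes "p \<noteq> 0"
  shows "Polynomial.order a (p ^ n) = n * Polynomial.order a p"
  using assms by (induction n) (auto simp: order_mult)

lemma coprime_no_common_complex_root:
  fixes p q :: "rat poly"
  assumes "coprime p q" and "poly (complex_poly_of_rat p) z = 0"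
  shows "poly (complex_poly_of_rat q) z \<noteq> 0"
proof
  assume "poly (complex_poly_of_rat q) z = 0"
  then have "[:-z, 1:] dvd gcd (complex_poly_of_rat p) (complex_poly_of_rat q)"
    using assms(2) by (simp add: poly_eq_0_iff_dvd)
  also have "gcd (complex_poly_of_rat p) (complex_poly_of_rat q) = 1"
    using assms(1) by (simp flip: rat_complex.map_poly_gcd)
  finally show False by (simp add: is_unit_iff_degree)
qed

lemma prime_elem_coprime_pderiv:
  fixes p :: "rat poly"
  assumes "prime_elem p"
  shows "coprime p (pderiv p)"
proof -
  have "degree p \<noteq> 0"
    using assms by (auto simp: prime_elem_def is_unit_iff_degree)
  then have "pderiv p \<noteq> 0" and "degree (pderiv p) < degree p"
    by (auto simp: pderiv_eq_0_iff degree_pderiv)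
  then have "\<not> p dvd pderiv p"
    using dvd_imp_degree_le by fastforce
  then show ?thesis
    using prime_elem_imp_coprime[OF assms] by simp
qed

lemma prime_elem_complex_root_simple:
  fixes p :: "rat poly"
  assumes p: "prime_elem p" and root: "poly (complex_poly_of_rat p) z = 0"
  shows "Polynomial.order z (complex_poly_of_rat p) = 1"
proof -
  have p0: "complex_poly_of_rat p \<noteq> 0"
    using p by (auto simp: prime_elem_def)
  have "poly (pderiv (complex_poly_of_rat p)) z \<noteq> 0"
    using coprime_no_common_complex_root[OF prime_elem_coprime_pderiv[OF p] root]
    by (simp add: of_rat_hom.map_poly_pderiv)
  then have "Polynomial.order z (pderiv (complex_poly_of_rat p)) = 0"
    by (simp add: order_0I)
  moreover have "Polynomial.order z (complex_poly_of_rat p) \<noteq> 0"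
    using root p0 order_root by blast
  ultimately show ?thesis
    using order_pderiv[OF p0 root] by (cases "Polynomial.order z (complex_poly_of_rat p)") auto
qed

lemma order_eq_multiplicity_prime_factor:
  fixes c p :: "rat poly"
  assumes c: "c \<noteq> 0" and p: "prime_elem p" and root: "poly (complex_poly_of_rat p) z = 0"
  shows "Polynomial.order z (complex_poly_of_rat c) = multiplicity p c"
proof -
  have "\<not> is_unit p" and p0: "p \<noteq> 0"
    using p by (auto simp: prime_elem_def)
  then obtain r where c_eq: "c = p ^ multiplicity p c * r" and "\<not> p dvd r"
    using multiplicity_decompose'[OF c] by metis
  then have r0: "r \<noteq> 0" by auto
  have "poly (complex_poly_of_rat r) z \<noteq> 0"
    using coprime_no_common_complex_root[OF prime_elem_imp_coprime[OF p \<open>\<not> p dvd r\<close>] root] .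
  then have "Polynomial.order z (complex_poly_of_rat r) = 0"
    by (simp add: order_0I)
  moreover have "complex_poly_of_rat c =
      complex_poly_of_rat p ^ multiplicity p c * complex_poly_of_rat r"
    by (subst c_eq) (simp add: rat_complex_poly.hom_mult rat_complex_poly.hom_power)
  ultimately show ?thesis
    using p0 r0 prime_elem_complex_root_simple[OF p root] by (simp add: order_mult order_power)
qed

lemma prime_factor_with_complex_root:
  fixes c :: "rat poly"
  assumes "c \<noteq> 0" and "poly (complex_poly_of_rat c) z = 0"
  obtains p where "prime_elem p" and "poly (complex_poly_of_rat p) z = 0"
proof -
  have "complex_poly_of_rat c = complex_poly_of_rat (unit_factor c) *
      prod_mset (image_mset complex_poly_of_rat (prime_factorization c))"
    by (subst (1) prime_decomposition[of c, symmetric])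
      (simp only: rat_complex_poly.hom_mult rat_complex_poly.hom_prod_mset)
  then have dec: "poly (complex_poly_of_rat c) z = poly (complex_poly_of_rat (unit_factor c)) z *
      (\<Prod>p\<in>#prime_factorization c. poly (complex_poly_of_rat p) z)"
    by (simp only: poly_mult poly_prod_mset)
  obtain a where "unit_factor c = [:a:]" and "a \<noteq> 0"
    using unit_factor_is_unit[OF assms(1)] by (metis is_unit_polyE' monom_0)
  then have "poly (complex_poly_of_rat (unit_factor c)) z \<noteq> 0" by simp
  then obtain p where "p \<in># prime_factorization c" and "poly (complex_poly_of_rat p) z = 0"
    using assms(2) unfolding dec by (auto simp: prod_mset_zero_iff)
  then show thesis
    using that in_prime_factors_imp_prime by (auto simp: prime_def)
qed

lemma rat_poly_degree_one_real_root_rational: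
  fixes p :: "rat poly"
  assumes "degree p = 1" and "poly (complex_poly_of_rat p) (complex_of_real \<mu>) = 0"
  shows "\<mu> \<in> \<rat>"
proof -
  define a b where "a = coeff p 0" and "b = coeff p 1"
  have p: "p = [:a, b:]"
    unfolding a_def b_def using assms(1)
    by (intro poly_eqI) (auto simp: coeff_pCons coeff_eq_0 split: nat.splits)
  have "b \<noteq> 0"
    unfolding b_def using assms(1) by (metis leading_coeff_0_iff one_neq_zero degree_0)
  have "complex_of_real \<mu> = of_rat (- a / b)"
    using assms(2) \<open>b \<noteq> 0\<close> unfolding p
    by (simp add: of_rat_hom.map_poly_pCons_hom of_rat_divide of_rat_minus field_simps
        eq_neg_iff_add_eq_0 add.commute)
  then have "\<mu> = of_rat (- a / b)"
    by (simp only: of_rat_eq_of_real_of_rat of_real_eq_iff)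
  then show ?thesis by simp
qed

lemma rat_poly_degree_two_monic_equation:
  fixes p :: "rat poly"
  assumes "degree p = 2"
  obtains b e :: real where "b \<in> \<rat>" and "e \<in> \<rat>"
    and "\<And>z. poly (complex_poly_of_rat p) z = 0 \<Longrightarrow> z\<^sup>2 + of_real b * z + of_real e = 0"
proof -
  define u v w where "u = coeff p 0" and "v = coeff p 1" and "w = coeff p 2"
  have p: "p = [:u, v, w:]"
    unfolding u_def v_def w_def using assms
    by (intro poly_eqI) (auto simp: coeff_pCons coeff_eq_0 numeral_2_eq_2 split: nat.splits)
  have "w \<noteq> 0"
    unfolding w_def using assms by (metis leading_coeff_0_iff zero_neq_numeral degree_0)
  show thesis
  proof (rule that[of "of_rat (v / w)" "of_rat (u / w)"])
    fix z assume "poly (complex_poly_of_rat p) z = 0"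
    then have "(of_rat u + z * (of_rat v + z * of_rat w)) / of_rat w = 0"
      unfolding p by (simp add: of_rat_hom.map_poly_pCons_hom)
    then show "z\<^sup>2 + of_real (of_rat (v / w)) * z + of_real (of_rat (u / w)) = 0"
      using \<open>w \<noteq> 0\<close>
      by (simp add: of_rat_divide field_simps power2_eq_square flip: of_rat_eq_of_real_of_rat)
  qed simp_all
qed

lemma complex_root_of_power_times_constant:
  fixes p r :: "rat poly"
  assumes "degree r = 0" and "r \<noteq> 0" and "poly (complex_poly_of_rat (p ^ j * r)) z = 0"
  shows "poly (complex_poly_of_rat p) z = 0"
proof -
  obtain a where "r = [:a:]" and "a \<noteq> 0"
    using assms(1,2) by (metis degree_eq_zeroE pCons_eq_0_iff)
  moreover have "poly (complex_poly_of_rat p) z ^ j * poly (complex_poly_of_rat r) z = 0"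
    using assms(3)
    unfolding rat_complex_poly.hom_mult rat_complex_poly.hom_power poly_mult poly_power .
  ultimately show ?thesis
    by simp
qed

lemma high_order_root_rational_or_quadratic:
  fixes c :: "int poly" and \<mu> :: real and m :: nat
  assumes c0: "c \<noteq> 0" and m0: "m > 0" and deg: "degree c \<le> 2 * m"
    and ord: "Polynomial.order (complex_of_real \<mu>) (map_poly of_int c) \<ge> m"
  shows "\<mu> \<in> \<rat> \<or> degree c = 2 * m \<and> (\<exists>b e. b \<in> \<rat> \<and> e \<in> \<rat> \<and> \<mu>\<^sup>2 + b * \<mu> + e = 0 \<and>
           (\<forall>z::complex. poly (map_poly of_int c) z = 0 \<longrightarrow> z\<^sup>2 + of_real b * z + of_real e = 0))"
proof -
  define cq where "cq = map_poly (of_int :: int \<Rightarrow> rat) c"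
  have cq: "complex_poly_of_rat cq = map_poly of_int c"
    unfolding cq_def by (subst map_poly_map_poly) (auto simp: o_def)
  have cq0: "cq \<noteq> 0" and deg_cq: "degree cq = degree c"
    using c0 unfolding cq_def by simp_all
  have "poly (complex_poly_of_rat cq) (complex_of_real \<mu>) = 0"
    using ord m0 c0 unfolding cq order_root by auto
  then obtain p where p: "prime_elem p"
    and root: "poly (complex_poly_of_rat p) (complex_of_real \<mu>) = 0"
    using prime_factor_with_complex_root[OF cq0] by blast
  have p0: "p \<noteq> 0" and "\<not> is_unit p"
    using p by (auto simp: prime_elem_def)
  then have "degree p \<ge> 1"
    using is_unit_iff_degree by fastforce
  define j where "j = multiplicity p cq"
  obtain r where cq_eq: "cq = p ^ j * r" and "\<not> p dvd r"
    using multiplicity_decompose'[OF cq0 \<open>\<not> is_unit p\<close>] unfolding j_def by metis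
  then have r0: "r \<noteq> 0" by auto
  have "j \<ge> m"
    using ord order_eq_multiplicity_prime_factor[OF cq0 p root] unfolding j_def cq by simp
  have deg_split: "degree c = degree p * j + degree r"
    using cq_eq p0 r0 deg_cq by (simp add: degree_mult_eq degree_power_eq)
  show ?thesis
  proof (cases "degree p = 1")
    case True
    then show ?thesis
      using rat_poly_degree_one_real_root_rational root by blast
  next
    case False
    with \<open>degree p \<ge> 1\<close> have "2 * j \<le> degree p * j" by simp
    with deg_split deg \<open>j \<ge> m\<close> have "j = m" "degree c = 2 * m" "degree r = 0" "degree p * j = 2 * j"
      by linarith+
    with m0 have "degree p = 2" by simp
    obtain b e where "b \<in> \<rat>" "e \<in> \<rat>"
      and quad: "\<And>z. poly (complex_poly_of_rat p) z = 0 \<Longrightarrow> z\<^sup>2 + of_real b * z + of_real e = 0"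
      using rat_poly_degree_two_monic_equation[OF \<open>degree p = 2\<close>] by blast
    have "complex_of_real (\<mu>\<^sup>2 + b * \<mu> + e) = 0"
      using quad[OF root] by simp
    moreover have "poly (complex_poly_of_rat p) z = 0" if "poly (map_poly of_int c) z = 0" for z
      using complex_root_of_power_times_constant[OF \<open>degree r = 0\<close> r0] that
      unfolding cq[symmetric] cq_eq by blast
    ultimately show ?thesis
      using \<open>degree c = 2 * m\<close> \<open>b \<in> \<rat>\<close> \<open>e \<in> \<rat>\<close> quad by (metis of_real_eq_0_iff)
  qed
qed

section \<open>Eigenspaces and traces\<close>

lemma kernel_dim_ge_cols_minus_rows:
  fixes Q :: "'a::field mat"
  assumes Q: "Q \<in> carrier_mat D N"
  shows "kernel_dim Q \<ge> N - D"
proof -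
  obtain C where gj: "gauss_jordan_single Q = C" by auto
  note g = gauss_jordan_single[OF Q gj]
  from g(3) obtain f where "pivot_fun C f (dim_col C)"
    unfolding row_echelon_form_def by auto
  with g(2) have "length (pivot_positions C) = card {i. i < D \<and> row C i \<noteq> 0\<^sub>v N}"
    by (intro pivot_positions(4)) auto
  also have "\<dots> \<le> card {..<D}"
    by (rule card_mono) auto
  finally show ?thesis
    unfolding kernel_dim_code gj using Q by simp
qed

lemma kernel_dim_le_mult_left:
  fixes P Q :: "'a::field mat"
  assumes P: "P \<in> carrier_mat M D" and Q: "Q \<in> carrier_mat D N"
  shows "kernel_dim Q \<le> kernel_dim (P * Q)"
proof -
  have PQ: "P * Q \<in> carrier_mat M N" using P Q by auto
  interpret KQ: kernel D N Q by (unfold_locales, rule Q)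
  interpret KPQ: kernel M N "P * Q" by (unfold_locales, rule PQ)
  obtain B where "finite B" and B: "KQ.basis B"
    using kernel_basis_exists[OF Q] by auto
  then have card_B: "card B = kernel_dim Q"
    using KQ.Ker.dim_basis by simp
  have BQ: "B \<subseteq> mat_kernel Q" and "KQ.lin_indpt B"
    using B unfolding KQ.Ker.basis_def by auto
  have sub: "mat_kernel Q \<subseteq> mat_kernel (P * Q)"
    by (rule mat_kernel_mult_subset[OF Q P])
  have "KPQ.lin_indpt B"
    using \<open>KQ.lin_indpt B\<close> KQ.lindep_same[OF BQ] KPQ.lindep_same[of B] BQ sub by auto
  obtain B' where "finite B'" and "KPQ.basis B'"
    using kernel_basis_exists[OF PQ] by auto
  then have "KPQ.Ker.fin_dim"
    unfolding KPQ.Ker.fin_dim_def KPQ.Ker.basis_def by auto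
  then have "card B \<le> KPQ.dim"
    using KPQ.Ker.li_le_dim(2) \<open>KPQ.lin_indpt B\<close> BQ sub by auto
  with card_B show ?thesis by simp
qed

lemma kernel_dim_mult_ge:
  fixes P Q :: "'a::field mat"
  assumes "P \<in> carrier_mat N D" and "Q \<in> carrier_mat D N"
  shows "kernel_dim (P * Q) \<ge> N - D"
  using kernel_dim_ge_cols_minus_rows[OF assms(2)] kernel_dim_le_mult_left[OF assms] by linarith

lemma kernel_dim_char_matrix_le_order:
  fixes A :: "complex mat"
  assumes A: "A \<in> carrier_mat n n"
  shows "kernel_dim (char_matrix A e) \<le> Polynomial.order e (char_poly A)"
proof -
  obtain as where "char_poly A = (\<Prod>a\<leftarrow>as. [:- a, 1:])"
    using char_poly_factorized[OF A] by auto
  from jordan_nf_exists[OF A this] obtain n_as where jnf: "jordan_nf A n_as" by auto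
  have "kernel_dim (char_matrix A e) = dim_gen_eigenspace A e 1"
    unfolding dim_gen_eigenspace_def using A by simp
  also have "\<dots> = (\<Sum> n \<leftarrow> map fst [(n, e')\<leftarrow>n_as . e' = e]. min 1 n)"
    by (rule dim_gen_eigenspace[OF jnf])
  also have "\<dots> \<le> sum_list (map fst (filter (\<lambda> na. snd na = e) n_as))"
    by (induction n_as) auto
  also have "\<dots> = Polynomial.order e (char_poly A)"
    by (rule jordan_nf_order[OF jnf, symmetric])
  finally show ?thesis .
qed

lemma upper_triangular_mult:
  fixes U V :: "'a::comm_ring_1 mat"
  assumes U: "U \<in> carrier_mat n n" and V: "V \<in> carrier_mat n n"
    and "upper_triangular U" and "upper_triangular V"
  shows "upper_triangular (U * V)"
    and "\<And>i. i < n \<Longrightarrow> (U * V) $$ (i, i) = U $$ (i, i) * V $$ (i, i)"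
proof -
  have U0: "U $$ (i, l) = 0" and V0: "V $$ (i, l) = 0" if "l < i" "i < n" for i l
    using assms that by auto
  have entry: "(U * V) $$ (i, k) = (\<Sum>l<n. U $$ (i, l) * V $$ (l, k))" if "i < n" "k < n" for i k
    using U V that by (simp add: scalar_prod_def lessThan_atLeast0)
  show "upper_triangular (U * V)"
  proof
    fix i k assume "i < dim_row (U * V)" and "k < i"
    then have i: "i < n" using U by simp
    have "(U * V) $$ (i, k) = (\<Sum>l<n. U $$ (i, l) * V $$ (l, k))"
      using entry i \<open>k < i\<close> by simp
    also have "\<dots> = 0"
    proof (rule sum.neutral, rule ballI)
      fix l assume "l \<in> {..<n}"
      then show "U $$ (i, l) * V $$ (l, k) = 0"
        using U0[of l i] V0[of k l] i \<open>k < i\<close> by (cases "l < i") auto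
    qed
    finally show "(U * V) $$ (i, k) = 0" .
  qed
  fix i assume i: "i < n"
  have "(U * V) $$ (i, i) = (\<Sum>l<n. U $$ (i, l) * V $$ (l, i))"
    using entry[OF i i] .
  also have "\<dots> = (\<Sum>l<n. if l = i then U $$ (i, i) * V $$ (i, i) else 0)"
  proof (rule sum.cong[OF refl])
    fix l assume "l \<in> {..<n}"
    then consider "l < i" | "l = i" | "i < l \<and> l < n" by fastforce
    then show "U $$ (i, l) * V $$ (l, i) = (if l = i then U $$ (i, i) * V $$ (i, i) else 0)"
      by cases (use U0[of l i] V0[of i l] i in auto)
  qed
  finally show "(U * V) $$ (i, i) = U $$ (i, i) * V $$ (i, i)"
    using i by simp
qed

lemma upper_triangular_char_matrix:
  fixes T :: "'a::field mat"
  assumes T: "T \<in> carrier_mat n n" and ut: "upper_triangular T"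
  shows "upper_triangular (char_matrix T a)"
proof
  fix k l assume "k < dim_row (char_matrix T a)" and "l < k"
  then show "char_matrix T a $$ (k, l) = 0"
    using upper_triangularD[OF ut \<open>l < k\<close>] T by (simp add: char_matrix_def)
qed

definition mat_trace :: "'a::comm_ring_1 mat \<Rightarrow> 'a" where
  "mat_trace M = (\<Sum>i<dim_row M. M $$ (i, i))"

lemma mat_trace_mult_comm:
  fixes A B :: "'a::comm_ring_1 mat"
  assumes "A \<in> carrier_mat n m" and "B \<in> carrier_mat m n"
  shows "mat_trace (A * B) = mat_trace (B * A)"
proof -
  have "mat_trace (A * B) = (\<Sum>i<n. \<Sum>k<m. A $$ (i, k) * B $$ (k, i))"
    unfolding mat_trace_def using assms by (simp add: scalar_prod_def lessThan_atLeast0)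
  also have "\<dots> = (\<Sum>k<m. \<Sum>i<n. B $$ (k, i) * A $$ (i, k))"
    by (subst sum.swap) (simp add: mult.commute)
  also have "\<dots> = mat_trace (B * A)"
    unfolding mat_trace_def using assms by (simp add: scalar_prod_def lessThan_atLeast0)
  finally show ?thesis .
qed

lemma mat_trace_conjugate:
  fixes P Q W :: "'a::comm_ring_1 mat"
  assumes P: "P \<in> carrier_mat n n" and Q: "Q \<in> carrier_mat n n" and W: "W \<in> carrier_mat n n"
    and QP: "Q * P = 1\<^sub>m n"
  shows "mat_trace (P * W * Q) = mat_trace W"
proof -
  have "mat_trace (P * W * Q) = mat_trace (P * (W * Q))" using P Q W by simp
  also have "\<dots> = mat_trace ((W * Q) * P)" using P Q W by (intro mat_trace_mult_comm) auto
  also have "(W * Q) * P = W" using P Q W QP by simp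
  finally show ?thesis .
qed

lemma conjugate_mult_conjugate:
  fixes P Q B C :: "'a::comm_ring_1 mat"
  assumes P: "P \<in> carrier_mat n n" and Q: "Q \<in> carrier_mat n n"
    and B: "B \<in> carrier_mat n n" and C: "C \<in> carrier_mat n n" and QP: "Q * P = 1\<^sub>m n"
  shows "(P * B * Q) * (P * C * Q) = P * (B * C) * Q"
proof -
  have "(P * B * Q) * (P * C * Q) = P * (B * ((Q * P) * (C * Q)))"
    using P Q B C by (simp add: assoc_mult_mat[of _ n n _ n _ n])
  also have "\<dots> = P * (B * C) * Q"
    using P Q B C QP by (simp add: assoc_mult_mat[of _ n n _ n _ n])
  finally show ?thesis .
qed

lemma mat_trace_of_real:
  "M \<in> carrier_mat n n \<Longrightarrow> mat_trace (map_mat of_real M) = of_real (mat_trace M)"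
  unfolding mat_trace_def by (simp add: of_real_sum)

lemma symmetric_mat_trace_square_zero:
  fixes R :: "real mat"
  assumes R: "R \<in> carrier_mat n n" and sym: "\<And>i j. i < n \<Longrightarrow> j < n \<Longrightarrow> R $$ (i, j) = R $$ (j, i)"
    and "mat_trace (R * R) = 0" and "i < n" and "j < n"
  shows "R $$ (i, j) = 0"
proof -
  have "mat_trace (R * R) = (\<Sum>k<n. \<Sum>l<n. (R $$ (k, l))\<^sup>2)"
    unfolding mat_trace_def using R sym
    by (auto simp: scalar_prod_def lessThan_atLeast0 power2_eq_square intro!: sum.cong)
  then have "\<forall>k\<in>{..<n}. \<forall>l\<in>{..<n}. (R $$ (k, l))\<^sup>2 = 0"
    using assms(3) by (simp add: sum_nonneg_eq_0_iff sum_nonneg)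
  then show ?thesis
    using assms(4,5) by simp
qed

lemma sum_mult_minus_deltas:
  fixes x y :: "nat \<Rightarrow> 'a::comm_ring_1"
  assumes "i < n" "j < n"
  shows "(\<Sum>l<n. (x l - (if i = l then r else 0)) * (y l - (if l = j then r' else 0)))
    = (\<Sum>l<n. x l * y l) - r' * x j - r * y i + (if i = j then r * r' else 0)"
proof -
  have "(\<Sum>l<n. (x l - (if i = l then r else 0)) * (y l - (if l = j then r' else 0)))
    = (\<Sum>l<n. x l * y l - (if l = j then r' * x l else 0) - (if i = l then r * y l else 0)
         + (if i = l then (if l = j then r * r' else 0) else 0))"
    by (rule sum.cong) (auto simp: algebra_simps)
  also have "\<dots> = (\<Sum>l<n. x l * y l) - r' * x j - r * y i + (if i = j then r * r' else 0)"
    using assms by (simp add: sum.distrib sum_subtractf)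
  finally show ?thesis .
qed

lemma char_matrix_mult_char_matrix_entry:
  fixes A :: "'a::field mat"
  assumes A: "A \<in> carrier_mat n n" and k: "k < n" and l: "l < n"
  shows "(char_matrix A r * char_matrix A r') $$ (k, l) =
    (\<Sum>m<n. A $$ (k, m) * A $$ (m, l)) - (r + r') * A $$ (k, l) + (if k = l then r * r' else 0)"
proof -
  have "(char_matrix A r * char_matrix A r') $$ (k, l) =
      (\<Sum>m<n. char_matrix A r $$ (k, m) * char_matrix A r' $$ (m, l))"
    using char_matrix_closed[OF A, where e = r] char_matrix_closed[OF A, where e = r'] k l
    by (simp add: scalar_prod_def lessThan_atLeast0)
  also have "\<dots> = (\<Sum>m<n. (A $$ (k, m) - (if k = m then r else 0)) *
      (A $$ (m, l) - (if m = l then r' else 0)))"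
    using A k l by (intro sum.cong) (auto simp: char_matrix_def)
  also have "\<dots> = (\<Sum>m<n. A $$ (k, m) * A $$ (m, l)) - (r + r') * A $$ (k, l) +
      (if k = l then r * r' else 0)"
    unfolding sum_mult_minus_deltas[OF k l] by (simp add: algebra_simps)
  finally show ?thesis .
qed

lemma complex_quadratic_split:
  fixes b e :: complex
  obtains r r' where "r + r' = - b" and "r * r' = e"
proof -
  define d where "d = csqrt (b\<^sup>2 - 4 * e)"
  have "((- b + d) / 2) * ((- b - d) / 2) = (b\<^sup>2 - d\<^sup>2) / 4"
    by (simp add: field_simps power2_eq_square)
  also have "d\<^sup>2 = b\<^sup>2 - 4 * e"
    unfolding d_def by simp
  finally show thesis
    by (intro that[of "(- b + d) / 2" "(- b - d) / 2"]) (simp_all add: field_simps)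
qed

text \<open>
  If every eigenvalue of \<open>A\<close> is \<open>r\<close> or \<open>r'\<close>, then \<open>(A - r)(A - r')\<close> is similar to an upper
  triangular matrix with zero diagonal (a Schur form), so its square has trace zero.
\<close>

lemma char_matrix_product_trace_square_zero:
  fixes A :: "complex mat"
  assumes A: "A \<in> carrier_mat n n"
    and roots: "\<And>z. poly (char_poly A) z = 0 \<Longrightarrow> (z - r) * (z - r') = 0"
  defines "Z \<equiv> char_matrix A r * char_matrix A r'"
  shows "mat_trace (Z * Z) = 0"
proof -
  obtain es where cp: "char_poly A = (\<Prod>a\<leftarrow>es. [:- a, 1:])"
    using char_poly_factorized[OF A] by auto
  define T where "T = schur_upper_triangular A es"
  note schur = schur_upper_triangular[OF A cp, folded T_def]
  have T: "T \<in> carrier_mat n n" and ut: "upper_triangular T"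
    using schur by auto
  obtain P Q where wit: "similar_mat_wit A T P Q"
    using schur(3) unfolding similar_mat_def by auto
  from similar_mat_witD2[OF A wit] have P: "P \<in> carrier_mat n n" and Q: "Q \<in> carrier_mat n n"
    and QP: "Q * P = 1\<^sub>m n" by auto
  have "char_poly A = (\<Prod>a\<leftarrow>diag_mat T. [:- a, 1:])"
    using char_poly_similar[OF schur(3)] char_poly_upper_triangular[OF T ut] by simp
  then have diag_roots: "(T $$ (k, k) - r) * (T $$ (k, k) - r') = 0" if "k < n" for k
    using that T by (intro roots) (auto simp: poly_prod_list prod_list_zero_iff diag_mat_def)
  have char_T: "char_matrix T a $$ (k, k) = T $$ (k, k) - a" if "k < n" for a k
    using that T by (simp add: char_matrix_def)
  note ut_char = upper_triangular_char_matrix[OF T ut]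
  define X where "X = char_matrix T r * char_matrix T r'"
  have CT: "char_matrix T a \<in> carrier_mat n n" for a
    using T by simp
  have X: "X \<in> carrier_mat n n"
    unfolding X_def using CT[of r] CT[of r'] by (rule mult_carrier_mat)
  have X_ut: "upper_triangular X"
    "\<And>k. k < n \<Longrightarrow> X $$ (k, k) = char_matrix T r $$ (k, k) * char_matrix T r' $$ (k, k)"
    unfolding X_def by (rule upper_triangular_mult[OF CT CT ut_char ut_char])+
  have X_diag: "X $$ (k, k) = 0" if "k < n" for k
    using X_ut(2)[OF that] diag_roots[OF that] char_T[OF that] by simp
  have "mat_trace (X * X) = 0"
    unfolding mat_trace_def using X X_diag upper_triangular_mult(2)[OF X X X_ut(1) X_ut(1)] by simp
  have char_A: "char_matrix A a = P * char_matrix T a * Q" for a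
    using similar_mat_wit_char_matrix[OF wit] unfolding similar_mat_wit_def Let_def by auto
  have "Z = P * X * Q"
    unfolding Z_def X_def char_A by (rule conjugate_mult_conjugate[OF P Q CT CT QP])
  then have "Z * Z = P * (X * X) * Q"
    using conjugate_mult_conjugate[OF P Q X X QP] by simp
  then show ?thesis
    using mat_trace_conjugate[OF P Q _ QP, of "X * X"] X \<open>mat_trace (X * X) = 0\<close> by simp
qed

lemma symmetric_matrix_quadratic_annihilator:
  fixes A :: "real mat" and b e :: real
  assumes A: "A \<in> carrier_mat n n" and sym: "\<And>i j. i < n \<Longrightarrow> j < n \<Longrightarrow> A $$ (i, j) = A $$ (j, i)"
    and roots: "\<And>z. poly (char_poly (map_mat complex_of_real A)) z = 0 \<Longrightarrow>
      z\<^sup>2 + of_real b * z + of_real e = 0"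
    and i: "i < n" and j: "j < n"
  shows "(\<Sum>l<n. A $$ (i, l) * A $$ (l, j)) + b * A $$ (i, j) + (if i = j then e else 0) = 0"
proof -
  define Ac where "Ac = map_mat complex_of_real A"
  have Ac: "Ac \<in> carrier_mat n n" using A unfolding Ac_def by simp
  define R where "R = mat n n (\<lambda>(k, l). (\<Sum>m<n. A $$ (k, m) * A $$ (m, l)) + b * A $$ (k, l)
    + (if k = l then e else 0))"
  have R: "R \<in> carrier_mat n n" unfolding R_def by simp
  have R_sym: "R $$ (k, l) = R $$ (l, k)" if "k < n" "l < n" for k l
    unfolding R_def using that sym by (auto intro!: sum.cong simp: mult.commute)
  obtain r r' :: complex where sum_rr': "r + r' = - of_real b" and prod_rr': "r * r' = of_real e"
    by (rule complex_quadratic_split[of "of_real b" "of_real e"])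
  define Z where "Z = char_matrix Ac r * char_matrix Ac r'"
  have "mat_trace (Z * Z) = 0"
    unfolding Z_def
  proof (rule char_matrix_product_trace_square_zero[OF Ac])
    fix z assume "poly (char_poly Ac) z = 0"
    moreover have "(z - r) * (z - r') = z\<^sup>2 - (r + r') * z + r * r'"
      by (simp add: algebra_simps power2_eq_square)
    ultimately show "(z - r) * (z - r') = 0"
      using roots sum_rr' prod_rr' unfolding Ac_def by simp
  qed
  have "Z = map_mat complex_of_real R"
  proof (rule eq_matI)
    fix k l assume "k < dim_row (map_mat complex_of_real R)" and "l < dim_col (map_mat complex_of_real R)"
    then have k: "k < n" and l: "l < n" using R by auto
    then show "Z $$ (k, l) = map_mat complex_of_real R $$ (k, l)"
      unfolding Z_def char_matrix_mult_char_matrix_entry[OF Ac k l] sum_rr' prod_rr'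
      using A by (cases "k = l") (simp_all add: R_def Ac_def)
  qed (use char_matrix_closed[OF Ac, where e = r] char_matrix_closed[OF Ac, where e = r'] R
      in \<open>auto simp: Z_def\<close>)
  have "of_real (mat_trace (R * R)) = mat_trace (map_mat complex_of_real (R * R))"
    by (rule mat_trace_of_real[OF mult_carrier_mat[OF R R], symmetric])
  also have "\<dots> = mat_trace (Z * Z)"
    by (simp only: \<open>Z = map_mat complex_of_real R\<close> of_real_hom.mat_hom_mult[OF R R])
  finally have "mat_trace (R * R) = 0"
    using \<open>mat_trace (Z * Z) = 0\<close> by simp
  then have "R $$ (i, j) = 0"
    using symmetric_mat_trace_square_zero[OF R R_sym _ i j] by simp
  then show ?thesis
    unfolding R_def using i j by simp
qed

section \<open>Graphs satisfying a quadratic equation\<close>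

text \<open>
  By the equation, distinct non-adjacent vertices have no common neighbour. So for an edge \<open>ij\<close>
  every neighbour of \<open>i\<close> other than \<open>j\<close> is a neighbour of \<open>j\<close>, and comparing the \<open>(i,j)\<close> and
  \<open>(i,i)\<close> entries makes \<open>-1\<close> a root.
\<close>

lemma adjacency_quadratic_rational_root:
  fixes a :: "nat \<Rightarrow> nat \<Rightarrow> real" and b e :: real
  assumes n: "n > 0"
    and a01: "\<And>i j. i < n \<Longrightarrow> j < n \<Longrightarrow> a i j = 0 \<or> a i j = 1"
    and diag: "\<And>i. i < n \<Longrightarrow> a i i = 0"
    and sym: "\<And>i j. i < n \<Longrightarrow> j < n \<Longrightarrow> a i j = a j i"
    and quad: "\<And>i j. i < n \<Longrightarrow> j < n \<Longrightarrow>
      (\<Sum>l<n. a i l * a l j) + b * a i j + (if i = j then e else 0) = 0"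
  shows "\<exists>t\<in>\<rat>. t\<^sup>2 + b * t + e = 0"
proof (cases "\<exists>i<n. \<exists>j<n. a i j = 1")
  case False
  then have "a i j = 0" if "i < n" "j < n" for i j
    using a01 that by blast
  then have "e = 0" using quad[OF n n] n by simp
  then show ?thesis by (intro bexI[of _ 0]) auto
next
  case True
  then obtain i j where i: "i < n" and j: "j < n" and aij: "a i j = 1" by auto
  have "i \<noteq> j" using diag[OF i] aij by auto
  have nonneg: "a k l \<ge> 0" if "k < n" "l < n" for k l
    using a01[OF that] by auto
  have degree: "(\<Sum>l<n. a i l) = - e"
  proof -
    have "(\<Sum>l<n. a i l * a l i) = (\<Sum>l<n. a i l)"
      using a01 sym i by (intro sum.cong) fastforce+
    then show ?thesis using quad[OF i i] diag[OF i] by simp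
  qed
  have common: "a i l * a l j = a i l - (if l = j then 1 else 0)" if l: "l < n" for l
  proof (cases "l = j \<or> a i l = 0")
    case True
    then show ?thesis using diag[OF j] aij by auto
  next
    case False
    then have ail: "a i l = 1" and "l \<noteq> j" using a01[OF i l] by auto
    have "a l j = 1"
    proof (rule ccontr)
      assume "a l j \<noteq> 1"
      then have "(\<Sum>m<n. a l m * a m j) = 0"
        using quad[OF l j] a01[OF l j] \<open>l \<noteq> j\<close> by simp
      moreover have "a l i * a i j \<le> (\<Sum>m<n. a l m * a m j)"
        using i l j nonneg by (intro member_le_sum) (auto intro: mult_nonneg_nonneg)
      moreover have "a l i * a i j = 1" using ail sym[OF i l] aij by simp
      ultimately show False by simp
    qed
    then show ?thesis using ail \<open>l \<noteq> j\<close> by simp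
  qed
  have "(\<Sum>l<n. a i l * a l j) = (\<Sum>l<n. a i l) - 1"
    using common j by (simp add: sum_subtractf)
  then have "1 - b + e = 0"
    using quad[OF i j] aij degree \<open>i \<noteq> j\<close> by simp
  then show ?thesis by (intro bexI[of _ "-1"]) (auto simp: power2_eq_square)
qed

section \<open>Integrality of a large eigenvalue\<close>

lemma monic_int_poly_rational_root_in_Ints:
  fixes c :: "int poly" and \<mu> :: real
  assumes "lead_coeff c = 1" and "poly (map_poly of_int c) (complex_of_real \<mu>) = 0" and "\<mu> \<in> \<rat>"
  shows "\<mu> \<in> \<int>"
proof -
  have "map_poly (of_int :: int \<Rightarrow> complex) c = map_poly complex_of_real (map_poly of_int c)"
    by (subst map_poly_map_poly) (auto simp: o_def)
  with assms(2) have "complex_of_real (poly (map_poly of_int c) \<mu>) = 0"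
    by (simp add: of_real_hom.poly_map_poly)
  then have "algebraic_int \<mu>"
    using assms(1) unfolding algebraic_int_altdef_ipoly by (metis of_real_eq_0_iff)
  then show ?thesis
    using assms(3) by (rule rational_algebraic_int_is_int)
qed

lemma adjacency_matrix_quadratic_eigenvalue_rational:
  fixes A :: "int mat" and \<mu> b e :: real
  assumes A: "A \<in> carrier_mat N N" and "N > 0"
    and graph: "\<And>i j. i < N \<Longrightarrow> j < N \<Longrightarrow> (A $$ (i, j) = 0 \<or> A $$ (i, j) = 1) \<and>
      A $$ (i, j) = A $$ (j, i) \<and> A $$ (i, i) = 0"
    and roots: "\<And>z::complex. poly (char_poly (map_mat of_int A)) z = 0 \<Longrightarrow>
      z\<^sup>2 + of_real b * z + of_real e = 0"
    and "b \<in> \<rat>" and "\<mu>\<^sup>2 + b * \<mu> + e = 0"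
  shows "\<mu> \<in> \<rat>"
proof -
  define Ar :: "real mat" where "Ar = map_mat of_int A"
  have Ar: "Ar \<in> carrier_mat N N" unfolding Ar_def using A by simp
  have "map_mat complex_of_real Ar = map_mat of_int A"
    unfolding Ar_def by (rule eq_matI) auto
  then have roots': "poly (char_poly (map_mat complex_of_real Ar)) z = 0 \<Longrightarrow>
      z\<^sup>2 + of_real b * z + of_real e = 0" for z
    using roots by simp
  have "(Ar $$ (i, j) = 0 \<or> Ar $$ (i, j) = 1) \<and> Ar $$ (i, j) = Ar $$ (j, i) \<and> Ar $$ (i, i) = 0"
    if "i < N" "j < N" for i j
    using graph[OF that] that A unfolding Ar_def by auto
  then have "\<exists>t\<in>\<rat>. t\<^sup>2 + b * t + e = 0"
    using \<open>N > 0\<close> by (intro adjacency_quadratic_rational_root[of N "\<lambda>i j. Ar $$ (i, j)"]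
        symmetric_matrix_quadratic_annihilator[OF Ar _ roots']) auto
  then obtain t where "t \<in> \<rat>" and "t\<^sup>2 + b * t + e = 0" by auto
  then have "(\<mu> - t) * (\<mu> + t + b) = 0"
    using assms(6) by (simp add: algebra_simps power2_eq_square)
  then have "\<mu> = t \<or> \<mu> = - t - b" by auto
  then show ?thesis
    using \<open>t \<in> \<rat>\<close> \<open>b \<in> \<rat>\<close> by auto
qed

lemma int_matrix_large_eigenspace_eigenvalue_in_Ints:
  fixes A :: "int mat" and \<mu> :: real
  assumes A: "A \<in> carrier_mat N N" and N0: "N > 0"
    and kernel: "kernel_dim (char_matrix (map_mat of_int A) (complex_of_real \<mu>)) \<ge> m"
    and half: "N \<le> 2 * m"
    and graph: "N = 2 * m \<Longrightarrow> \<forall>i<N. \<forall>j<N. (A $$ (i, j) = 0 \<or> A $$ (i, j) = 1) \<and>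
      A $$ (i, j) = A $$ (j, i) \<and> A $$ (i, i) = 0"
  shows "\<mu> \<in> \<int>"
proof -
  have cp: "char_poly (map_mat of_int A) = map_poly (of_int :: int \<Rightarrow> complex) (char_poly A)"
    by (rule of_int_hom.char_poly_hom[OF A])
  have ord: "Polynomial.order (complex_of_real \<mu>) (map_poly of_int (char_poly A)) \<ge> m"
    using kernel_dim_char_matrix_le_order[of "map_mat of_int A"] A kernel cp
    by (metis map_carrier_mat order_trans)
  have deg: "degree (char_poly A) = N" and "coeff (char_poly A) N = 1"
    using degree_monic_char_poly[OF A] by auto
  then have c0: "char_poly A \<noteq> 0" and monic: "lead_coeff (char_poly A) = 1" by auto
  have m0: "m > 0" using half N0 by simp
  then have root: "poly (map_poly of_int (char_poly A)) (complex_of_real \<mu>) = 0"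
    using ord order_root by fastforce
  have "\<mu> \<in> \<rat>"
  proof (rule ccontr)
    assume "\<mu> \<notin> \<rat>"
    then obtain b e where "b \<in> \<rat>" "\<mu>\<^sup>2 + b * \<mu> + e = 0"
      and roots: "\<forall>z::complex. poly (map_poly of_int (char_poly A)) z = 0 \<longrightarrow>
        z\<^sup>2 + of_real b * z + of_real e = 0"
      and "N = 2 * m"
      using high_order_root_rational_or_quadratic[OF c0 m0 _ ord] half deg by auto
    have "\<mu> \<in> \<rat>"
    proof (rule adjacency_matrix_quadratic_eigenvalue_rational[OF A N0])
      show "(A $$ (i, j) = 0 \<or> A $$ (i, j) = 1) \<and> A $$ (i, j) = A $$ (j, i) \<and> A $$ (i, i) = 0"
        if "i < N" and "j < N" for i j
        using graph[OF \<open>N = 2 * m\<close>] that by blast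
      show "z\<^sup>2 + of_real b * z + of_real e = 0"
        if "poly (char_poly (map_mat of_int A)) z = 0" for z :: complex
        using roots that cp by simp
    qed fact+
    with \<open>\<mu> \<notin> \<rat>\<close> show False ..
  qed
  then show ?thesis
    using monic_int_poly_rational_root_in_Ints[OF monic root] by blast
qed

text \<open>
  Here \<open>K/s = A + (d/s) I\<close> with \<open>A\<close> integral of corank at least \<open>N - D\<close>, so \<open>-d/s\<close> is an
  eigenvalue of \<open>A\<close> of that geometric multiplicity.
\<close>

lemma low_rank_matrix_diagonal_ratio_in_Ints:
  fixes K :: "nat \<Rightarrow> nat \<Rightarrow> real" and w :: "nat \<Rightarrow> nat \<Rightarrow> int"
    and \<Phi> \<Psi> :: "nat \<Rightarrow> nat \<Rightarrow> real" and d s :: real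
  assumes "N > 0" and s0: "s \<noteq> 0"
    and factor: "\<And>i j. i < N \<Longrightarrow> j < N \<Longrightarrow> K i j = (\<Sum>k<D. \<Phi> i k * \<Psi> k j)"
    and diag: "\<And>i. i < N \<Longrightarrow> K i i = d"
    and off_diag: "\<And>i j. i < N \<Longrightarrow> j < N \<Longrightarrow> i \<noteq> j \<Longrightarrow> K i j = s * of_int (w i j)"
    and large: "2 * D \<le> N"
    and graph: "2 * D = N \<Longrightarrow> \<forall>i<N. \<forall>j<N. i \<noteq> j \<longrightarrow> (w i j = 0 \<or> w i j = 1) \<and> w i j = w j i"
  shows "d / s \<in> \<int>"
proof -
  define A :: "int mat" where "A = mat N N (\<lambda>(i, j). if i = j then 0 else w i j)"
  define P :: "complex mat" where "P = mat N D (\<lambda>(i, k). of_real (\<Phi> i k / s))"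
  define Q :: "complex mat" where "Q = mat D N (\<lambda>(k, j). of_real (\<Psi> k j))"
  have A: "A \<in> carrier_mat N N" and P: "P \<in> carrier_mat N D" and Q: "Q \<in> carrier_mat D N"
    unfolding A_def P_def Q_def by auto
  have gram: "char_matrix (map_mat of_int A) (complex_of_real (- d / s)) = P * Q"
  proof (rule eq_matI)
    fix i j assume "i < dim_row (P * Q)" and "j < dim_col (P * Q)"
    then have i: "i < N" and j: "j < N" using P Q by auto
    have "(P * Q) $$ (i, j) = of_real (K i j / s)"
      using P Q i j factor[OF i j]
      by (simp add: P_def Q_def scalar_prod_def lessThan_atLeast0 sum_divide_distrib)
    then show "char_matrix (map_mat of_int A) (complex_of_real (- d / s)) $$ (i, j) =
        (P * Q) $$ (i, j)"
      using i j s0 diag[OF i] off_diag[OF i j]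
      by (cases "i = j") (simp_all add: char_matrix_def A_def)
  qed (use A P Q in \<open>auto simp: char_matrix_def\<close>)
  have "kernel_dim (char_matrix (map_mat of_int A) (complex_of_real (- d / s))) \<ge> N - D"
    unfolding gram by (rule kernel_dim_mult_ge[OF P Q])
  moreover have "N \<le> 2 * (N - D)"
    using large by simp
  moreover have "\<forall>i<N. \<forall>j<N. (A $$ (i, j) = 0 \<or> A $$ (i, j) = 1) \<and>
      A $$ (i, j) = A $$ (j, i) \<and> A $$ (i, i) = 0" if "N = 2 * (N - D)"
  proof (intro allI impI)
    fix i j assume "i < N" and "j < N"
    moreover have "2 * D = N"
      using that large by linarith
    ultimately show "(A $$ (i, j) = 0 \<or> A $$ (i, j) = 1) \<and>
        A $$ (i, j) = A $$ (j, i) \<and> A $$ (i, i) = 0"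
      using graph unfolding A_def by auto
  qed
  ultimately have "- d / s \<in> \<int>"
    by (rule int_matrix_large_eigenspace_eigenvalue_in_Ints[OF A \<open>N > 0\<close>])
  then show ?thesis
    using Ints_minus[of "- d / s"] by simp
qed

lemma low_rank_kernel_diagonal_ratio_in_Ints:
  fixes Y :: "'v set" and T :: "'t set" and K :: "'v \<Rightarrow> 'v \<Rightarrow> real" and w :: "'v \<Rightarrow> 'v \<Rightarrow> int"
    and \<Phi> :: "'v \<Rightarrow> 't \<Rightarrow> real" and \<Psi> :: "'t \<Rightarrow> 'v \<Rightarrow> real" and d s :: real
  assumes "finite Y" and "Y \<noteq> {}" and "finite T" and "s \<noteq> 0"
    and factor: "\<And>x y. x \<in> Y \<Longrightarrow> y \<in> Y \<Longrightarrow> K x y = (\<Sum>\<tau>\<in>T. \<Phi> x \<tau> * \<Psi> \<tau> y)"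
    and diag: "\<And>x. x \<in> Y \<Longrightarrow> K x x = d"
    and off_diag: "\<And>x y. x \<in> Y \<Longrightarrow> y \<in> Y \<Longrightarrow> x \<noteq> y \<Longrightarrow> K x y = s * of_int (w x y)"
    and large: "2 * card T \<le> card Y"
    and graph: "2 * card T = card Y \<Longrightarrow>
      \<forall>x\<in>Y. \<forall>y\<in>Y. x \<noteq> y \<longrightarrow> (w x y = 0 \<or> w x y = 1) \<and> w x y = w y x"
  shows "d / s \<in> \<int>"
proof -
  obtain ys where ys: "bij_betw ys {0..<card Y} Y"
    using ex_bij_betw_nat_finite[OF \<open>finite Y\<close>] by auto
  obtain ts where ts: "bij_betw ts {0..<card T} T"
    using ex_bij_betw_nat_finite[OF \<open>finite T\<close>] by auto
  have ysY: "ys i \<in> Y" if "i < card Y" for i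
    using ys that by (auto dest: bij_betwE)
  have ys_inj: "ys i = ys j \<longleftrightarrow> i = j" if "i < card Y" "j < card Y" for i j
    using ys that unfolding bij_betw_def inj_on_def by auto
  show ?thesis
  proof (rule low_rank_matrix_diagonal_ratio_in_Ints[where K = "\<lambda>i j. K (ys i) (ys j)"
        and w = "\<lambda>i j. w (ys i) (ys j)" and N = "card Y" and D = "card T"
        and \<Phi> = "\<lambda>i k. \<Phi> (ys i) (ts k)" and \<Psi> = "\<lambda>k j. \<Psi> (ts k) (ys j)"])
    show "card Y > 0"
      using \<open>finite Y\<close> \<open>Y \<noteq> {}\<close> by (simp add: card_gt_0_iff)
  next
    fix i j assume "i < card Y" and "j < card Y"
    then show "K (ys i) (ys j) = (\<Sum>k<card T. \<Phi> (ys i) (ts k) * \<Psi> (ts k) (ys j))"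
      using factor[OF ysY ysY] sum.reindex_bij_betw[OF ts, of "\<lambda>\<tau>. \<Phi> (ys i) \<tau> * \<Psi> \<tau> (ys j)"]
      by (simp add: lessThan_atLeast0)
  next
    fix i j assume "i < card Y" and "j < card Y" and "i \<noteq> j"
    then show "K (ys i) (ys j) = s * of_int (w (ys i) (ys j))"
      using off_diag ysY ys_inj by simp
  next
    assume "2 * card T = card Y"
    then show "\<forall>i<card Y. \<forall>j<card Y. i \<noteq> j \<longrightarrow>
        (w (ys i) (ys j) = 0 \<or> w (ys i) (ys j) = 1) \<and> w (ys i) (ys j) = w (ys j) (ys i)"
      using graph ysY ys_inj by simp
  qed (use \<open>s \<noteq> 0\<close> large diag ysY in auto)
qed

section \<open>Polynomial kernels on the sphere\<close>

no_notation Matrix.vec_index (infixl "$" 100)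

definition mset_monomial :: "'n multiset \<Rightarrow> real ^ 'n \<Rightarrow> real" where
  "mset_monomial M y = (\<Prod>i\<in>#M. y $ i)"

lemma sum_mult_regroup:
  fixes c :: "'p \<Rightarrow> 'a::semiring_0"
  assumes "finite S" "finite T" "h ` S \<subseteq> T"
  shows "(\<Sum>p\<in>S. c p * g (h p)) = (\<Sum>M\<in>T. (\<Sum>p\<in>{p\<in>S. h p = M}. c p) * g M)"
proof -
  have "(\<Sum>p\<in>S. c p * g (h p)) = (\<Sum>M\<in>T. \<Sum>p\<in>{p\<in>S. h p = M}. c p * g (h p))"
    using assms by (intro sum.group[symmetric]) auto
  also have "\<dots> = (\<Sum>M\<in>T. (\<Sum>p\<in>{p\<in>S. h p = M}. c p) * g M)"
    by (simp add: sum_distrib_right)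
  finally show ?thesis .
qed

lemma inner_vec_real_sum: "inner x y = (\<Sum>i\<in>UNIV. x $ i * y $ i)"
  for x y :: "real ^ 'n"
  by (simp add: inner_vec_def)

text \<open>Using \<open>y \<bullet> y = 1\<close>, the lower order term is homogenised to the degree of the leading one.\<close>

lemma inner_square_expansion:
  fixes x y :: "real ^ 'n"
  assumes "inner y y = 1"
  shows "(inner x y)\<^sup>2 - a =
    (\<Sum>i\<in>UNIV. \<Sum>j\<in>UNIV. (x $ i * x $ j - (if i = j then a else 0)) * (y $ i * y $ j))"
proof -
  have "(inner x y)\<^sup>2 = (\<Sum>i\<in>UNIV. \<Sum>j\<in>UNIV. x $ i * x $ j * (y $ i * y $ j))"
    unfolding inner_vec_real_sum power2_eq_square sum_product by (simp add: algebra_simps)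
  moreover have "a = (\<Sum>i\<in>UNIV. \<Sum>j\<in>UNIV. (if i = j then a else 0) * (y $ i * y $ j))"
  proof -
    have "a = a * inner y y" using assms by simp
    also have "\<dots> = (\<Sum>i\<in>UNIV. \<Sum>j\<in>UNIV. (if i = j then a * (y $ i * y $ j) else 0))"
      unfolding inner_vec_real_sum by (simp add: sum_distrib_left)
    also have "\<dots> = (\<Sum>i\<in>UNIV. \<Sum>j\<in>UNIV. (if i = j then a else 0) * (y $ i * y $ j))"
      by (intro sum.cong) auto
    finally show ?thesis .
  qed
  ultimately show ?thesis
    by (simp add: left_diff_distrib sum_subtractf)
qed

lemma inner_cube_expansion:
  fixes x y :: "real ^ 'n"
  assumes "inner y y = 1"
  shows "(inner x y) ^ 3 - a * inner x y =
    (\<Sum>i\<in>UNIV. \<Sum>j\<in>UNIV. \<Sum>l\<in>UNIV.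
      (x $ i * x $ j * x $ l - (if j = l then a * x $ i else 0)) * (y $ i * y $ j * y $ l))"
proof -
  define u where "u i = x $ i * y $ i" for i
  have "(inner x y) ^ 3 = sum u UNIV * (sum u UNIV * sum u UNIV)"
    unfolding inner_vec_real_sum u_def by (simp add: power3_eq_cube mult.assoc)
  also have "sum u UNIV * sum u UNIV = (\<Sum>j\<in>UNIV. \<Sum>l\<in>UNIV. u j * u l)"
    by (rule sum_product)
  also have "sum u UNIV * (\<Sum>j\<in>UNIV. \<Sum>l\<in>UNIV. u j * u l) =
      (\<Sum>i\<in>UNIV. \<Sum>j\<in>UNIV. u i * (\<Sum>l\<in>UNIV. u j * u l))"
    by (rule sum_product)
  also have "\<dots> = (\<Sum>i\<in>UNIV. \<Sum>j\<in>UNIV. \<Sum>l\<in>UNIV. x $ i * x $ j * x $ l * (y $ i * y $ j * y $ l))"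
    unfolding u_def by (simp add: sum_distrib_left ac_simps)
  finally have "(inner x y) ^ 3 = \<dots>" .
  moreover have "a * inner x y =
      (\<Sum>i\<in>UNIV. \<Sum>j\<in>UNIV. \<Sum>l\<in>UNIV. (if j = l then a * x $ i else 0) * (y $ i * y $ j * y $ l))"
  proof -
    have "a * inner x y = (\<Sum>i\<in>UNIV. a * (x $ i * y $ i)) * (\<Sum>j\<in>UNIV. y $ j * y $ j)"
      using assms unfolding inner_vec_real_sum by (simp add: sum_distrib_left)
    also have "\<dots> = (\<Sum>i\<in>UNIV. \<Sum>j\<in>UNIV. \<Sum>l\<in>UNIV.
        (if j = l then a * x $ i * (y $ i * y $ j * y $ l) else 0))"
      unfolding sum_product by (simp add: algebra_simps)
    also have "\<dots> = (\<Sum>i\<in>UNIV. \<Sum>j\<in>UNIV. \<Sum>l\<in>UNIV.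
        (if j = l then a * x $ i else 0) * (y $ i * y $ j * y $ l))"
      by (intro sum.cong) auto
    finally show ?thesis .
  qed
  ultimately show ?thesis
    by (simp add: left_diff_distrib sum_subtractf)
qed

lemma inner_square_kernel_factors:
  "\<exists>\<Phi>. \<forall>x y :: real ^ 'n. inner y y = 1 \<longrightarrow>
    (inner x y)\<^sup>2 - a = (\<Sum>M\<in>multisets_of_size UNIV 2. \<Phi> x M * mset_monomial M y)"
proof (intro exI allI impI)
  fix x y :: "real ^ 'n" assume "inner y y = 1"
  define c where "c p = x $ fst p * x $ snd p - (if fst p = snd p then a else 0)" for p :: "'n \<times> 'n"
  have "(inner x y)\<^sup>2 - a = (\<Sum>p\<in>UNIV. c p * mset_monomial {#fst p, snd p#} y)"
    unfolding inner_square_expansion[OF \<open>inner y y = 1\<close>] UNIV_Times_UNIV[symmetric]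
      sum.cartesian_product mset_monomial_def c_def by (simp add: case_prod_beta)
  also have "\<dots> = (\<Sum>M\<in>multisets_of_size UNIV 2.
      (\<Sum>p\<in>{p\<in>UNIV. {#fst p, snd p#} = M}. c p) * mset_monomial M y)"
    by (rule sum_mult_regroup[OF _ finite_multisets_of_size]) (auto simp: multisets_of_size_def)
  finally show "(inner x y)\<^sup>2 - a = (\<Sum>M\<in>multisets_of_size UNIV 2.
      (\<Sum>p | {#fst p, snd p#} = M. x $ fst p * x $ snd p - (if fst p = snd p then a else 0)) *
        mset_monomial M y)"
    unfolding c_def by simp
qed

lemma inner_cube_kernel_factors:
  "\<exists>\<Phi>. \<forall>x y :: real ^ 'n. inner y y = 1 \<longrightarrow>
    (inner x y) ^ 3 - a * inner x y = (\<Sum>M\<in>multisets_of_size UNIV 3. \<Phi> x M * mset_monomial M y)"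
proof (intro exI allI impI)
  fix x y :: "real ^ 'n" assume "inner y y = 1"
  define c where "c p = x $ fst p * x $ fst (snd p) * x $ snd (snd p) -
    (if fst (snd p) = snd (snd p) then a * x $ fst p else 0)" for p :: "'n \<times> 'n \<times> 'n"
  have "(inner x y) ^ 3 - a * inner x y =
      (\<Sum>p\<in>UNIV. c p * mset_monomial {#fst p, fst (snd p), snd (snd p)#} y)"
    unfolding inner_cube_expansion[OF \<open>inner y y = 1\<close>] UNIV_Times_UNIV[symmetric]
      sum.cartesian_product mset_monomial_def c_def by (simp add: case_prod_beta algebra_simps)
  also have "\<dots> = (\<Sum>M\<in>multisets_of_size UNIV 3.
      (\<Sum>p\<in>{p\<in>UNIV. {#fst p, fst (snd p), snd (snd p)#} = M}. c p) * mset_monomial M y)"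
    by (rule sum_mult_regroup[OF _ finite_multisets_of_size]) (auto simp: multisets_of_size_def)
  finally show "(inner x y) ^ 3 - a * inner x y = (\<Sum>M\<in>multisets_of_size UNIV 3.
      (\<Sum>p | {#fst p, fst (snd p), snd (snd p)#} = M. x $ fst p * x $ fst (snd p) * x $ snd (snd p) -
        (if fst (snd p) = snd (snd p) then a * x $ fst p else 0)) * mset_monomial M y)"
    unfolding c_def by simp
qed

lemma inner_products_memberD:
  assumes "inner_products Y \<subseteq> S" "x \<in> Y" "y \<in> Y" "x \<noteq> y"
  shows "inner x y \<in> S"
  using assms unfolding inner_products_def by blast

lemma sphere_inner_self: "y \<in> sphere (0 :: real ^ 'n) 1 \<Longrightarrow> inner y y = 1"
  by (simp add: dot_square_norm)

lemma four_distance_square_ratio_in_Ints: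
  fixes Y :: "(real ^ 'n) set"
  assumes "finite Y" and Y: "Y \<subseteq> sphere 0 1" and I: "inner_products Y \<subseteq> {\<alpha>, -\<alpha>, \<beta>, -\<beta>}"
    and "\<beta>\<^sup>2 \<noteq> \<alpha>\<^sup>2" and large: "2 * (CARD('n) + 1 choose 2) \<le> card Y"
  shows "(1 - \<alpha>\<^sup>2) / (\<beta>\<^sup>2 - \<alpha>\<^sup>2) \<in> \<int>"
proof -
  obtain \<Phi> where \<Phi>: "\<And>x y :: real ^ 'n. inner y y = 1 \<Longrightarrow>
      (inner x y)\<^sup>2 - \<alpha>\<^sup>2 = (\<Sum>M\<in>multisets_of_size UNIV 2. \<Phi> x M * mset_monomial M y)"
    using inner_square_kernel_factors by blast
  have "Y \<noteq> {}" using large by auto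
  have unit: "inner x x = 1" if "x \<in> Y" for x
    using that Y sphere_inner_self by blast
  show ?thesis
  proof (rule low_rank_kernel_diagonal_ratio_in_Ints[where K = "\<lambda>x y. (inner x y)\<^sup>2 - \<alpha>\<^sup>2"
        and w = "\<lambda>x y. if (inner x y)\<^sup>2 = \<beta>\<^sup>2 then 1 else 0" and \<Phi> = \<Phi> and \<Psi> = mset_monomial])
    show "2 * card (multisets_of_size (UNIV :: 'n set) 2) \<le> card Y"
      using large by (simp add: card_multisets_of_size)
    fix x y assume "x \<in> Y" "y \<in> Y"
    then show "(inner x y)\<^sup>2 - \<alpha>\<^sup>2 = (\<Sum>M\<in>multisets_of_size UNIV 2. \<Phi> x M * mset_monomial M y)"
      using \<Phi> unit by blast
    assume "x \<noteq> y"
    then show "(inner x y)\<^sup>2 - \<alpha>\<^sup>2 = (\<beta>\<^sup>2 - \<alpha>\<^sup>2) * of_int (if (inner x y)\<^sup>2 = \<beta>\<^sup>2 then 1 else 0)"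
      using inner_products_memberD[OF I \<open>x \<in> Y\<close> \<open>y \<in> Y\<close>] \<open>\<beta>\<^sup>2 \<noteq> \<alpha>\<^sup>2\<close> by auto
  qed (use assms \<open>Y \<noteq> {}\<close> unit in \<open>auto simp: inner_commute\<close>)
qed

lemma four_distance_cube_ratio_in_Ints:
  fixes Y :: "(real ^ 'n) set"
  assumes "finite Y" and Y: "Y \<subseteq> sphere 0 1" and I: "inner_products Y \<subseteq> {\<alpha>, -\<alpha>, \<beta>, -\<beta>}"
    and "\<beta> \<noteq> 0" and "\<beta>\<^sup>2 \<noteq> \<alpha>\<^sup>2" and large: "2 * (CARD('n) + 2 choose 3) < card Y"
  shows "(1 - \<alpha>\<^sup>2) / (\<beta> * (\<beta>\<^sup>2 - \<alpha>\<^sup>2)) \<in> \<int>"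
proof -
  obtain \<Phi> where \<Phi>: "\<And>x y :: real ^ 'n. inner y y = 1 \<Longrightarrow>
      (inner x y) ^ 3 - \<alpha>\<^sup>2 * inner x y = (\<Sum>M\<in>multisets_of_size UNIV 3. \<Phi> x M * mset_monomial M y)"
    using inner_cube_kernel_factors by blast
  have "Y \<noteq> {}" using large by auto
  have unit: "inner x x = 1" if "x \<in> Y" for x
    using that Y sphere_inner_self by blast
  have "\<alpha> \<noteq> \<beta>" "\<alpha> \<noteq> - \<beta>"
    using \<open>\<beta>\<^sup>2 \<noteq> \<alpha>\<^sup>2\<close> by auto
  show ?thesis
  proof (rule low_rank_kernel_diagonal_ratio_in_Ints[
        where K = "\<lambda>x y. (inner x y) ^ 3 - \<alpha>\<^sup>2 * inner x y"
        and w = "\<lambda>x y. if inner x y = \<beta> then 1 else if inner x y = - \<beta> then - 1 else 0"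
        and \<Phi> = \<Phi> and \<Psi> = mset_monomial])
    show "2 * card (multisets_of_size (UNIV :: 'n set) 3) \<le> card Y"
      using large by (simp add: card_multisets_of_size)
    fix x y assume "x \<in> Y" "y \<in> Y"
    then show "(inner x y) ^ 3 - \<alpha>\<^sup>2 * inner x y =
        (\<Sum>M\<in>multisets_of_size UNIV 3. \<Phi> x M * mset_monomial M y)"
      using \<Phi> unit by blast
    assume "x \<noteq> y"
    then show "(inner x y) ^ 3 - \<alpha>\<^sup>2 * inner x y = \<beta> * (\<beta>\<^sup>2 - \<alpha>\<^sup>2) *
        of_int (if inner x y = \<beta> then 1 else if inner x y = - \<beta> then - 1 else 0)"
      using inner_products_memberD[OF I \<open>x \<in> Y\<close> \<open>y \<in> Y\<close>] \<open>\<beta> \<noteq> 0\<close> \<open>\<alpha> \<noteq> \<beta>\<close> \<open>\<alpha> \<noteq> - \<beta>\<close>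
      by (auto simp: power2_eq_square power3_eq_cube algebra_simps)
  qed (use assms \<open>Y \<noteq> {}\<close> unit in \<open>auto simp: card_multisets_of_size\<close>)
qed

theorem lemma6p4:
  fixes Y :: "(real ^ 'n) set" and \<alpha> \<beta> :: real
  assumes "CARD('n) \<ge> 2"
    and "finite Y"
    and "Y \<subseteq> sphere 0 1"
    and "inner_products Y = {\<alpha>, -\<alpha>, \<beta>, -\<beta>}"
    and "0 < \<beta>" and "\<beta> < \<alpha>" and "\<alpha> < 1"
  shows "(real (card Y) \<ge> 2 * real (CARD('n) + 1 choose 2) \<longrightarrow>
            (1 - \<alpha>^2) / (\<beta>^2 - \<alpha>^2) \<in> \<int> \<and> (1 - \<beta>^2) / (\<alpha>^2 - \<beta>^2) \<in> \<int>)
       \<and> (real (card Y) \<ge> 2 * real (CARD('n) + 2 choose 3) + 1 \<longrightarrow>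
            (1 - \<alpha>^2) / (\<beta> * (\<beta>^2 - \<alpha>^2)) \<in> \<int> \<and> (1 - \<beta>^2) / (\<alpha> * (\<alpha>^2 - \<beta>^2)) \<in> \<int>)"
proof -
  have I: "inner_products Y \<subseteq> {\<alpha>, -\<alpha>, \<beta>, -\<beta>}" "inner_products Y \<subseteq> {\<beta>, -\<beta>, \<alpha>, -\<alpha>}"
    using assms(4) by auto
  have "\<beta>\<^sup>2 < \<alpha>\<^sup>2"
    using assms(5,6) by (simp add: power_strict_mono)
  then have "\<beta>\<^sup>2 \<noteq> \<alpha>\<^sup>2" "\<alpha>\<^sup>2 \<noteq> \<beta>\<^sup>2" "\<alpha> \<noteq> 0" "\<beta> \<noteq> 0"
    using assms(5) by auto
  note squares = four_distance_square_ratio_in_Ints[OF assms(2,3)]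
  note cubes = four_distance_cube_ratio_in_Ints[OF assms(2,3)]
  show ?thesis
    using squares[OF I(1) \<open>\<beta>\<^sup>2 \<noteq> \<alpha>\<^sup>2\<close>] squares[OF I(2) \<open>\<alpha>\<^sup>2 \<noteq> \<beta>\<^sup>2\<close>]
      cubes[OF I(1) \<open>\<beta> \<noteq> 0\<close> \<open>\<beta>\<^sup>2 \<noteq> \<alpha>\<^sup>2\<close>] cubes[OF I(2) \<open>\<alpha> \<noteq> 0\<close> \<open>\<alpha>\<^sup>2 \<noteq> \<beta>\<^sup>2\<close>]
    by linarith
qed

end
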